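(* Let $p$ be a prime, $q$ a power of $p$, $F$ a field of characteristic $p$ containing $\mathbb{F}_q$, and $s>1$ an integer such that $\mathbb{F}_{q^s}$ is not contained in $F$. Let $L(x)=a_0x+a_1x^{q^s}+\cdots+a_mx^{q^{ms}}\in F[x]$ with $m\geq1$, $a_m\neq0$, and with no repeated roots in its splitting field $E$ over $F$; put $n=ms$ and let $v_1,\dots,v_n$ be an ordered $\mathbb{F}_q$-basis of the space of roots of $L$. Then the map $\epsilon_s:H_{n,s}(\mathbb{F}_q)\to E$, $\epsilon_s(P)=P(v_1,\dots,v_n)$, is not injective.
   Context: $H_{n,s}(\mathbb{F}_q)$ is the space of homogeneous polynomials of degree $s$ in $\mathbb{F}_q[x_1,\dots,x_n]$ together with $0$. Such an $L$ is called a $q^s$-polynomial; its roots form an $\mathbb{F}_q$-space of dimension $ms$. *)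

theory Defs
  imports "HOL-Computational_Algebra.Polynomial"
begin

definition is_subfield :: "'a::field set \<Rightarrow> bool" where
  "is_subfield K \<longleftrightarrow> 0 \<in> K \<and> 1 \<in> K \<and>
     (\<forall>x\<in>K. \<forall>y\<in>K. x + y \<in> K \<and> x * y \<in> K) \<and>
     (\<forall>x\<in>K. - x \<in> K) \<and> (\<forall>x\<in>K. x \<noteq> 0 \<longrightarrow> inverse x \<in> K)"

definition hom_monos :: "nat \<Rightarrow> nat \<Rightarrow> (nat \<Rightarrow> nat) set" where
  "hom_monos n s = {\<alpha>. (\<forall>j\<ge>n. \<alpha> j = 0) \<and> (\<Sum>j<n. \<alpha> j) = s}"

text \<open>H_{n,s}(K): homogeneous polynomials of degree s in n variables with coefficients
  in K (together with 0), represented by their coefficient functions on monomials.\<close>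
definition Hns :: "'a::field set \<Rightarrow> nat \<Rightarrow> nat \<Rightarrow> ((nat \<Rightarrow> nat) \<Rightarrow> 'a) set" where
  "Hns K n s = {c. (\<forall>\<alpha>. c \<alpha> \<in> K) \<and> (\<forall>\<alpha>. \<alpha> \<notin> hom_monos n s \<longrightarrow> c \<alpha> = 0)}"

definition eval_hom :: "nat \<Rightarrow> nat \<Rightarrow> ((nat \<Rightarrow> nat) \<Rightarrow> 'a::field) \<Rightarrow> (nat \<Rightarrow> 'a) \<Rightarrow> 'a" where
  "eval_hom n s c v = (\<Sum>\<alpha>\<in>hom_monos n s. c \<alpha> * (\<Prod>j<n. v j ^ \<alpha> j))"

end

(* Put Q = q^s. The roots of the Q-polynomial L are Q^m = q^n distinct elements; rescaling L by a
   nonzero root u gives a Q-polynomial with coefficient sum 0, hence divisible by X^Q - X, so X^Q - X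
   also has Q distinct roots and K = {x. x^Q = x} is a field with Q elements. L is K-linear, so the
   K-span of v_1, ..., v_n lies in the root set, which is smaller than K^n: there is a relation
   \<Sum> e_i v_i = 0 with e_i \<in> K and some e_i0 = 1. The norm form \<Prod>_{j<s} \<Sum>_i e_i^(q^j) x_i is then
   a nonzero element of H_{n,s}(F_q) (the q-Frobenius permutes its factors, and its coefficient of
   x_i0^s is 1) which vanishes at v, because its factor for j = 0 does. *)
theory Submission
  imports Defs "HOL-Library.Multiset" "HOL-Library.FuncSet"
begin

definition words :: "'b set \<Rightarrow> nat \<Rightarrow> 'b list set" where
  "words A s = {xs. set xs \<subseteq> A \<and> length xs = s}"

lemma finite_words: "finite A \<Longrightarrow> finite (words A s)"
  unfolding words_def by (rule finite_lists_length_eq)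

lemma sum_words_prod_nth:
  fixes g :: "nat \<Rightarrow> 'b \<Rightarrow> 'a::comm_semiring_1"
  assumes "finite A"
  shows "(\<Sum>xs\<in>words A s. \<Prod>j<s. g j (xs ! j)) = (\<Prod>j<s. \<Sum>x\<in>A. g j x)"
proof (induction s arbitrary: g)
  case 0
  have "words A 0 = {[]}" by (auto simp: words_def)
  then show ?case by simp
next
  case (Suc s)
  have "(\<Sum>xs\<in>words A (Suc s). \<Prod>j<Suc s. g j (xs ! j))
      = (\<Sum>(xs, x)\<in>words A s \<times> A. g 0 x * (\<Prod>j<s. g (Suc j) (xs ! j)))"
    unfolding words_def lists_length_Suc_eq
    by (subst sum.reindex)
       (auto simp: inj_on_def prod.lessThan_Suc_shift simp del: prod.lessThan_Suc intro!: sum.cong)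
  also have "\<dots> = (\<Sum>x\<in>A. g 0 x) * (\<Sum>xs\<in>words A s. \<Prod>j<s. g (Suc j) (xs ! j))"
    by (simp add: sum.cartesian_product[symmetric] sum_product sum.swap[of _ A] mult.commute)
  also have "\<dots> = (\<Prod>j<Suc s. \<Sum>x\<in>A. g j x)"
    by (simp add: Suc.IH[of "\<lambda>j. g (Suc j)"] prod.lessThan_Suc_shift del: prod.lessThan_Suc)
  finally show ?case .
qed

lemma prod_power_count_mset:
  fixes v :: "nat \<Rightarrow> 'a::comm_monoid_mult"
  assumes "set xs \<subseteq> {..<n}"
  shows "(\<Prod>i<n. v i ^ count (mset xs) i) = (\<Prod>j<length xs. v (xs ! j))"
  using assms
proof (induction xs)
  case (Cons x xs)
  have "v i ^ count (mset (x # xs)) i = (if i = x then v i else 1) * v i ^ count (mset xs) i" for i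
    by simp
  then have "(\<Prod>i<n. v i ^ count (mset (x # xs)) i)
      = (\<Prod>i<n. if i = x then v i else 1) * (\<Prod>i<n. v i ^ count (mset xs) i)"
    by (simp only: prod.distrib)
  also have "\<dots> = v x * (\<Prod>j<length xs. v (xs ! j))"
    using Cons by (simp add: prod.delta')
  finally show ?case by (simp add: prod.lessThan_Suc_shift del: prod.lessThan_Suc)
qed simp

lemma count_mset_in_hom_monos:
  "xs \<in> words {..<n} s \<Longrightarrow> count (mset xs) \<in> hom_monos n s"
proof -
  assume "xs \<in> words {..<n} s"
  then have xs: "set xs \<subseteq> {..<n}" "length xs = s" by (auto simp: words_def)
  have "(\<Sum>i<n. count (mset xs) i) = size (mset xs)"
    using xs(1) by (simp add: size_multiset_overloaded_eq sum.mono_neutral_right[of "{..<n}"])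
  then show ?thesis using xs unfolding hom_monos_def by (auto simp: count_eq_zero_iff)
qed

lemma finite_hom_monos: "finite (hom_monos n s)"
proof (rule finite_subset)
  show "hom_monos n s \<subseteq> {\<alpha>. \<forall>j. (j \<in> {..<n} \<longrightarrow> \<alpha> j \<in> {..s}) \<and> (j \<notin> {..<n} \<longrightarrow> \<alpha> j = 0)}"
    unfolding hom_monos_def by (auto simp: member_le_sum[of _ "{..<n}" , simplified])
qed (rule finite_set_of_finite_funs; simp)

definition norm_weight :: "nat \<Rightarrow> (nat \<Rightarrow> 'a::comm_ring_1) \<Rightarrow> nat list \<Rightarrow> 'a" where
  "norm_weight q e xs = (\<Prod>j<length xs. e (xs ! j) ^ q ^ j)"

text \<open>The coefficient of \<open>x\<^sup>\<alpha>\<close> in the norm form \<open>\<Prod>j<s. \<Sum>i<n. e i ^ q ^ j * x i\<close>: expanding the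
  product, each word \<open>xs\<close> of length \<open>s\<close> contributes \<open>norm_weight q e xs\<close> to the monomial
  counting its letters.\<close>
definition norm_form :: "nat \<Rightarrow> nat \<Rightarrow> nat \<Rightarrow> (nat \<Rightarrow> 'a::comm_ring_1) \<Rightarrow> (nat \<Rightarrow> nat) \<Rightarrow> 'a" where
  "norm_form q n s e \<alpha> = (\<Sum>xs | xs \<in> words {..<n} s \<and> count (mset xs) = \<alpha>. norm_weight q e xs)"

lemma norm_weight_Cons: "norm_weight q e (y # xs) = e y * norm_weight q e xs ^ q"
  by (simp add: norm_weight_def prod.lessThan_Suc_shift prod_power_distrib power_mult_distrib
      flip: power_mult del: prod.lessThan_Suc) (simp add: mult.commute)

lemma norm_weight_snoc: "norm_weight q e (xs @ [y]) = norm_weight q e xs * e y ^ q ^ length xs"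
  by (auto simp: norm_weight_def nth_append intro!: prod.cong)

lemma norm_weight_power_rotate:
  assumes "xs \<noteq> []" and "e (last xs) ^ q ^ length xs = e (last xs)"
  shows "norm_weight q e xs ^ q = norm_weight q e (last xs # butlast xs)"
proof -
  obtain l where l: "length xs = Suc l"
    using assms(1) by (cases xs) auto
  have "norm_weight q e xs = norm_weight q e (butlast xs) * e (last xs) ^ q ^ l"
    using assms(1) l by (metis append_butlast_last_id norm_weight_snoc length_butlast diff_Suc_1)
  then have "norm_weight q e xs ^ q = norm_weight q e (butlast xs) ^ q * e (last xs) ^ q ^ length xs"
    by (simp add: l power_mult_distrib mult.commute flip: power_mult)
  then show ?thesis
    using assms(2) by (simp add: norm_weight_Cons mult.commute)
qed

lemma eval_norm_form:
  "eval_hom n s (norm_form q n s e) v = (\<Prod>j<s. \<Sum>i<n. e i ^ q ^ j * v i)"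
proof -
  let ?W = "words {..<n} s"
  have "eval_hom n s (norm_form q n s e) v
      = (\<Sum>\<alpha>\<in>hom_monos n s. \<Sum>xs | xs \<in> ?W \<and> count (mset xs) = \<alpha>.
           norm_weight q e xs * (\<Prod>i<n. v i ^ count (mset xs) i))"
    unfolding eval_hom_def norm_form_def sum_distrib_right by (rule sum.cong) auto
  also have "\<dots> = (\<Sum>xs\<in>?W. norm_weight q e xs * (\<Prod>i<n. v i ^ count (mset xs) i))"
    by (rule sum.group) (auto simp: finite_words finite_hom_monos count_mset_in_hom_monos)
  also have "\<dots> = (\<Sum>xs\<in>?W. \<Prod>j<s. e (xs ! j) ^ q ^ j * v (xs ! j))"
    by (rule sum.cong) (auto simp: words_def prod_power_count_mset norm_weight_def prod.distrib)
  also have "\<dots> = (\<Prod>j<s. \<Sum>i<n. e i ^ q ^ j * v i)"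
    by (rule sum_words_prod_nth) simp
  finally show ?thesis .
qed

text \<open>Raising to the power \<open>q\<close> turns the weight of a word into the weight of its cyclic rotation.\<close>
lemma norm_form_power_char:
  fixes e :: "nat \<Rightarrow> 'a::comm_ring_1"
  assumes "prime CHAR('a)" and "q = CHAR('a) ^ k" and "s > 0"
    and "\<forall>i<n. e i ^ q ^ s = e i"
  shows "norm_form q n s e \<alpha> ^ q = norm_form q n s e \<alpha>"
proof -
  let ?A = "{xs \<in> words {..<n} s. count (mset xs) = \<alpha>}"
  let ?rot = "\<lambda>xs. last xs # butlast xs"
  have nonempty: "xs \<noteq> []" if "xs \<in> ?A" for xs
    using that \<open>s > 0\<close> by (auto simp: words_def)
  have rot_in: "?rot xs \<in> ?A" if "xs \<in> ?A" for xs
  proof -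
    have "mset (?rot xs) = mset (butlast xs @ [last xs])" by simp
    also have "\<dots> = mset xs" using nonempty[OF that] by simp
    finally have eq: "mset (?rot xs) = mset xs" .
    show ?thesis
      using that mset_eq_setD[OF eq] mset_eq_length[OF eq] eq unfolding words_def by simp
  qed
  have rotate1_in: "rotate1 xs \<in> ?A" if "xs \<in> ?A" for xs
    using that by (cases xs) (auto simp: words_def)
  have rot_rotate1: "?rot (rotate1 xs) = xs" and rotate1_rot: "rotate1 (?rot xs) = xs"
    if "xs \<noteq> []" for xs :: "nat list"
    using that by (cases xs; simp)+
  have "norm_form q n s e \<alpha> ^ q = (\<Sum>xs\<in>?A. norm_weight q e xs ^ q)"
    unfolding norm_form_def using assms(1,2) by (rule freshmans_dream_sum')
  also have "\<dots> = (\<Sum>xs\<in>?A. norm_weight q e (?rot xs))"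
  proof (intro sum.cong refl norm_weight_power_rotate nonempty)
    fix xs assume "xs \<in> ?A"
    then have "last xs \<in> set xs" "set xs \<subseteq> {..<n}" "length xs = s"
      using nonempty by (auto simp: words_def)
    then show "e (last xs) ^ q ^ length xs = e (last xs)" using assms(4) by auto
  qed
  also have "\<dots> = (\<Sum>xs\<in>?A. norm_weight q e xs)"
    using rot_in rotate1_in rot_rotate1 rotate1_rot nonempty
    by (intro sum.reindex_bij_witness[where i = rotate1 and j = ?rot]) blast+
  finally show ?thesis unfolding norm_form_def .
qed

lemma norm_form_in_Hns:
  fixes e :: "nat \<Rightarrow> 'a::field"
  assumes "prime CHAR('a)" and "q = CHAR('a) ^ k" and "s > 0"
    and "\<forall>i<n. e i ^ q ^ s = e i"
  shows "norm_form q n s e \<in> Hns {x. x ^ q = x} n s"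
proof -
  have "norm_form q n s e \<alpha> = 0" if "\<alpha> \<notin> hom_monos n s" for \<alpha>
  proof -
    have empty: "{xs \<in> words {..<n} s. count (mset xs) = \<alpha>} = {}"
      using that count_mset_in_hom_monos by blast
    show ?thesis unfolding norm_form_def empty by simp
  qed
  then show ?thesis
    using norm_form_power_char[OF assms] by (simp add: Hns_def)
qed

lemma norm_form_replicate_mset:
  assumes "i < n"
  shows "norm_form q n s e (count (replicate_mset s i)) = (\<Prod>j<s. e i ^ q ^ j)"
proof -
  have "{xs \<in> words {..<n} s. count (mset xs) = count (replicate_mset s i)} = {replicate s i}"
  proof (intro equalityI subsetI)
    fix xs assume xs: "xs \<in> {xs \<in> words {..<n} s. count (mset xs) = count (replicate_mset s i)}"
    then have "mset xs = replicate_mset s i"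
      by (simp add: multiset_eqI)
    then have "\<forall>y\<in>set xs. y = i"
      by (metis in_replicate_mset set_mset_mset)
    then show "xs \<in> {replicate s i}"
      using xs by (auto simp: words_def intro: replicate_eqI)
  qed (use assms in \<open>auto simp: words_def\<close>)
  then show ?thesis by (simp add: norm_form_def norm_weight_def)
qed

lemma not_inj_on_eval_hom_of_relation:
  fixes e v :: "nat \<Rightarrow> 'a::field"
  assumes "prime CHAR('a)" and "q = CHAR('a) ^ k" and "s > 0"
    and "\<forall>i<n. e i ^ q ^ s = e i"
    and "i0 < n" and "e i0 = 1" and "(\<Sum>i<n. e i * v i) = 0"
  shows "\<not> inj_on (\<lambda>P. eval_hom n s P v) (Hns {x. x ^ q = x} n s)"
proof
  assume inj: "inj_on (\<lambda>P. eval_hom n s P v) (Hns {x. x ^ q = x} n s)"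
  have "eval_hom n s (norm_form q n s e) v = eval_hom n s (\<lambda>_. 0) v"
    unfolding eval_norm_form using assms(3,7)
    by (simp add: eval_hom_def) (auto intro!: prod_zero bexI[of _ 0])
  moreover have "(\<lambda>_. 0) \<in> Hns {x::'a. x ^ q = x} n s"
    using assms(1,2) by (simp add: Hns_def zero_power prime_gt_0_nat)
  ultimately have "norm_form q n s e = (\<lambda>_. 0)"
    using inj_onD[OF inj] norm_form_in_Hns[OF assms(1-4)] by blast
  moreover have "norm_form q n s e (count (replicate_mset s i0)) = 1"
    using assms(5,6) by (simp add: norm_form_replicate_mset)
  ultimately show False by simp
qed

lemma frobenius_diff:
  fixes x y :: "'a::comm_ring_1"
  assumes "prime CHAR('a)" and "Q = CHAR('a) ^ t"
  shows "(x - y) ^ Q = x ^ Q - y ^ Q"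
  using freshmans_dream'[OF assms, of "x - y" y] by (simp add: algebra_simps)

lemma power_minus_self_dvd_iterate:
  fixes x :: "'a::comm_ring_1"
  shows "x ^ Q - x dvd x ^ Q ^ i - x"
proof (induction i)
  case (Suc i)
  have "x ^ Q ^ i - x dvd (x ^ Q ^ i) ^ Q - x ^ Q"
    by (simp add: power_diff_sumr2)
  with Suc have "x ^ Q - x dvd ((x ^ Q ^ i) ^ Q - x ^ Q) + (x ^ Q - x)"
    by (meson dvd_add dvd_refl dvd_trans)
  then show ?case by (simp add: power_mult mult.commute flip: power_mult)
qed simp

definition linearized_poly :: "nat \<Rightarrow> (nat \<Rightarrow> 'a::comm_ring_1) \<Rightarrow> nat \<Rightarrow> 'a poly" where
  "linearized_poly Q a m = (\<Sum>i\<le>m. monom (a i) (Q ^ i))"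

lemma poly_linearized_poly: "poly (linearized_poly Q a m) x = (\<Sum>i\<le>m. a i * x ^ Q ^ i)"
  by (simp add: linearized_poly_def poly_sum poly_monom)

lemma degree_linearized_poly:
  assumes "Q \<ge> 2" and "a m \<noteq> 0"
  shows "degree (linearized_poly Q a m) = Q ^ m"
proof (rule antisym)
  have "Q ^ i = Q ^ m \<longleftrightarrow> i = m" for i
    using assms(1) by (simp add: power_inject_exp)
  then have "coeff (linearized_poly Q a m) (Q ^ m) = a m"
    by (simp add: linearized_poly_def coeff_sum coeff_monom)
  with assms(2) show "Q ^ m \<le> degree (linearized_poly Q a m)"
    by (simp add: le_degree)
  have "degree (monom (a i) (Q ^ i)) \<le> Q ^ m" if "i \<le> m" for i
    using assms(1) that by (intro order.trans[OF degree_monom_le] power_increasing) auto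
  then show "degree (linearized_poly Q a m) \<le> Q ^ m"
    unfolding linearized_poly_def by (intro degree_sum_le) auto
qed

lemma poly_linearized_poly_add:
  fixes a :: "nat \<Rightarrow> 'a::comm_ring_1"
  assumes "prime CHAR('a)" and "Q = CHAR('a) ^ t"
  shows "poly (linearized_poly Q a m) (x + y) = poly (linearized_poly Q a m) x + poly (linearized_poly Q a m) y"
proof -
  have "(x + y) ^ Q ^ i = x ^ Q ^ i + y ^ Q ^ i" for i
    using assms by (intro freshmans_dream'[where n = "t * i"]) (simp_all add: power_mult)
  then show ?thesis
    by (simp add: poly_linearized_poly distrib_left sum.distrib)
qed

lemma poly_linearized_poly_scale:
  assumes "c ^ Q = c"
  shows "poly (linearized_poly Q a m) (c * x) = c * poly (linearized_poly Q a m) x"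
proof -
  have "c ^ Q ^ i = c" for i
    by (induction i) (simp_all add: power_mult assms)
  then show ?thesis
    by (simp add: poly_linearized_poly power_mult_distrib sum_distrib_left algebra_simps)
qed

lemma poly_linearized_poly_combination:
  fixes a c v :: "nat \<Rightarrow> 'a::comm_ring_1"
  assumes "prime CHAR('a)" and "Q = CHAR('a) ^ t"
    and "\<forall>i<n. c i ^ Q = c i" and "\<forall>i<n. poly (linearized_poly Q a m) (v i) = 0"
  shows "poly (linearized_poly Q a m) (\<Sum>i<n. c i * v i) = 0"
  using assms(3,4)
proof (induction n)
  case 0
  have "Q > 0" using assms(1,2) by (simp add: prime_gt_0_nat)
  then show ?case by (simp add: poly_linearized_poly zero_power)
qed (simp add: poly_linearized_poly_add[OF assms(1,2)] poly_linearized_poly_scale)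

lemma card_roots_eq_degree:
  fixes p :: "'a::idom poly"
  assumes "p \<noteq> 0" and "p = smult (lead_coeff p) (\<Prod>x\<in>{x. poly p x = 0}. [:- x, 1:])"
  shows "card {x. poly p x = 0} = degree p"
proof -
  have "degree p = degree (\<Prod>x\<in>{x. poly p x = 0}. [:- x, 1:])"
    using assms by (metis degree_smult_eq leading_coeff_0_iff)
  also have "\<dots> = card {x. poly p x = 0}"
    by (subst degree_prod_eq_sum_degree) auto
  finally show ?thesis by simp
qed

lemma degree_le_card_roots_of_dvd:
  fixes p r :: "'a::idom poly"
  assumes "p dvd r" and "r \<noteq> 0" and "degree r \<le> card {x. poly r x = 0}"
  shows "degree p \<le> card {x. poly p x = 0}"
proof -
  obtain h where r: "r = p * h" using assms(1) by (elim dvdE)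
  with assms(2) have "p \<noteq> 0" "h \<noteq> 0" by auto
  have "card {x. poly r x = 0} \<le> card ({x. poly p x = 0} \<union> {x. poly h x = 0})"
    using \<open>p \<noteq> 0\<close> \<open>h \<noteq> 0\<close> by (intro card_mono) (auto simp: r poly_roots_finite)
  also have "\<dots> \<le> card {x. poly p x = 0} + degree h"
    using card_Un_le card_poly_roots_bound[OF \<open>h \<noteq> 0\<close>] by (metis add_left_mono order.trans)
  finally show ?thesis
    using assms(3) \<open>p \<noteq> 0\<close> \<open>h \<noteq> 0\<close> by (simp add: r degree_mult_eq)
qed

lemma fixed_poly_dvd_linearized_poly:
  assumes "(\<Sum>i\<le>m. b i) = 0"
  shows "[:0, 1:] ^ Q - [:0, 1:] dvd linearized_poly Q b m"
proof -
  have "(\<Sum>i\<le>m. smult (b i) [:0, 1:]) = 0"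
    unfolding smult_sum[symmetric] assms by simp
  then have "linearized_poly Q b m = (\<Sum>i\<le>m. smult (b i) ([:0, 1:] ^ Q ^ i - [:0, 1:]))"
    by (simp add: linearized_poly_def monom_altdef smult_diff_right sum_subtractf)
  then show ?thesis
    by (simp add: dvd_sum dvd_smult power_minus_self_dvd_iterate)
qed

lemma degree_fixed_poly:
  assumes "Q \<ge> 2"
  shows "degree ([:0, 1:] ^ Q - [:0, 1::'a::idom:]) = Q"
proof -
  have "degree (- [:0, 1::'a:]) < degree ([:0, 1::'a:] ^ Q)"
    using assms by (simp add: degree_power_eq)
  then have "degree ([:0, 1:] ^ Q + - [:0, 1::'a:]) = degree ([:0, 1::'a:] ^ Q)"
    by (rule degree_add_eq_left)
  then show ?thesis
    unfolding diff_conv_add_uminus by (simp add: degree_power_eq)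
qed

text \<open>Rescaling by a nonzero root \<open>u\<close> gives a \<open>Q\<close>-polynomial \<open>G\<close> with coefficient sum \<open>0\<close>, so
  \<open>X\<^sup>Q - X\<close> divides \<open>G\<close>; as \<open>G\<close> has as many roots as its degree, so does \<open>X\<^sup>Q - X\<close>.\<close>
lemma card_power_fixed_points_ge:
  fixes a :: "nat \<Rightarrow> 'a::field"
  assumes "Q \<ge> 2" and "m \<ge> 1" and "a m \<noteq> 0"
    and card_roots: "card {x. poly (linearized_poly Q a m) x = 0} = Q ^ m"
  shows "Q \<le> card {x::'a. x ^ Q = x}"
proof -
  let ?L = "linearized_poly Q a m"
  have "Q ^ m \<ge> 2"
    using assms(1,2) self_le_power[of Q m] by simp
  then have "\<not> {x. poly ?L x = 0} \<subseteq> {0}"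
    using card_roots card_mono[of "{0}" "{x. poly ?L x = 0}"] by auto
  then obtain u where u: "poly ?L u = 0" "u \<noteq> 0" by blast
  define b where "b i = a i * u ^ Q ^ i" for i
  let ?G = "linearized_poly Q b m" and ?D = "[:0, 1:] ^ Q - [:0, 1::'a:]"
  have poly_G: "poly ?G c = poly ?L (c * u)" for c
    by (simp add: poly_linearized_poly b_def power_mult_distrib algebra_simps)
  have "(\<Sum>i\<le>m. b i) = 0"
    using poly_G[of 1] u(1) by (simp add: poly_linearized_poly)
  then have "?D dvd ?G"
    by (rule fixed_poly_dvd_linearized_poly)
  moreover have degree_G: "degree ?G = Q ^ m"
    using assms(1,3) u(2) by (simp add: degree_linearized_poly b_def)
  then have "?G \<noteq> 0"
    using assms(1) by (intro notI) simp
  moreover have "{c. poly ?G c = 0} = (\<lambda>x. x / u) ` {x. poly ?L x = 0}"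
    using u(2) by (auto simp: poly_G image_iff intro!: exI[of _ "_ * u"])
  then have "degree ?G \<le> card {c. poly ?G c = 0}"
    using u(2) card_roots degree_G by (simp add: card_image inj_on_def)
  ultimately have "degree ?D \<le> card {x. poly ?D x = 0}"
    by (rule degree_le_card_roots_of_dvd)
  then show ?thesis
    using assms(1) by (simp add: degree_fixed_poly)
qed

lemma obtain_normalized_relation_by_counting:
  fixes v :: "nat \<Rightarrow> 'a::field"
  assumes diff_closed: "\<And>x y. x \<in> K \<Longrightarrow> y \<in> K \<Longrightarrow> x - y \<in> K"
    and divide_closed: "\<And>x y. x \<in> K \<Longrightarrow> y \<in> K \<Longrightarrow> x / y \<in> K"
    and "finite V" and "card V < card K ^ n"
    and combinations: "\<And>c. \<forall>i<n. c i \<in> K \<Longrightarrow> (\<Sum>i<n. c i * v i) \<in> V"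
  obtains e i0 where "i0 < n" and "e i0 = 1" and "\<forall>i<n. e i \<in> K" and "(\<Sum>i<n. e i * v i) = 0"
proof -
  let ?C = "PiE {..<n} (\<lambda>_. K)" and ?comb = "\<lambda>c. \<Sum>i<n. c i * v i"
  have "\<not> inj_on ?comb ?C"
  proof
    assume "inj_on ?comb ?C"
    then have "card ?C \<le> card V"
      using combinations \<open>finite V\<close> by (intro card_inj_on_le) auto
    then show False
      using \<open>card V < card K ^ n\<close> by (simp add: card_PiE)
  qed
  then obtain c d where cd: "c \<in> ?C" "d \<in> ?C" "c \<noteq> d" "?comb c = ?comb d"
    unfolding inj_on_def by blast
  then obtain i0 where i0: "i0 < n" "c i0 \<noteq> d i0"
    using PiE_ext[of c "{..<n}" "\<lambda>_. K" d] by auto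
  define e where "e i = (c i - d i) / (c i0 - d i0)" for i
  show thesis
  proof (rule that[of i0 e])
    show "\<forall>i<n. e i \<in> K"
      using cd(1,2) i0(1) by (auto simp: e_def intro!: divide_closed diff_closed)
    have "(\<Sum>i<n. e i * v i) = (?comb c - ?comb d) / (c i0 - d i0)"
      by (simp add: e_def left_diff_distrib sum_subtractf flip: sum_divide_distrib)
    then show "(\<Sum>i<n. e i * v i) = 0"
      using cd(4) by simp
  qed (use i0 in \<open>simp_all add: e_def\<close>)
qed

lemma obtain_power_fixed_relation:
  fixes a v :: "nat \<Rightarrow> 'a::field"
  assumes char: "prime CHAR('a)" "Q = CHAR('a) ^ t" and "Q \<ge> 2"
    and "m \<ge> 1" and "a m \<noteq> 0" and card_roots: "card {x. poly (linearized_poly Q a m) x = 0} = Q ^ m"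
    and "m < n" and roots: "\<forall>i<n. poly (linearized_poly Q a m) (v i) = 0"
  obtains e i0 where "i0 < n" and "e i0 = 1" and "\<forall>i<n. e i ^ Q = e i" and "(\<Sum>i<n. e i * v i) = 0"
proof -
  let ?K = "{x::'a. x ^ Q = x}" and ?V = "{x. poly (linearized_poly Q a m) x = 0}"
  have "Q \<le> card ?K"
    using assms(3-6) by (rule card_power_fixed_points_ge)
  then have "Q ^ n \<le> card ?K ^ n"
    by (rule power_mono) simp
  moreover have "Q ^ m < Q ^ n"
    using \<open>Q \<ge> 2\<close> \<open>m < n\<close> by simp
  ultimately have few_roots: "card ?V < card ?K ^ n"
    using card_roots by simp
  have finite_roots: "finite ?V"
    using card_roots \<open>Q \<ge> 2\<close> by (intro card_ge_0_finite) simp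
  obtain e i0 where "i0 < n" "e i0 = 1" "\<forall>i<n. e i \<in> ?K" "(\<Sum>i<n. e i * v i) = 0"
  proof (rule obtain_normalized_relation_by_counting[of ?K ?V n v])
    show "x - y \<in> ?K" if "x \<in> ?K" "y \<in> ?K" for x y
      using that by (simp add: frobenius_diff[OF char])
    show "x / y \<in> ?K" if "x \<in> ?K" "y \<in> ?K" for x y
      using that by (simp add: power_divide)
    show "(\<Sum>i<n. c i * v i) \<in> ?V" if "\<forall>i<n. c i \<in> ?K" for c
      using that poly_linearized_poly_combination[OF char _ roots] by simp
  qed (use finite_roots few_roots in blast)+
  then show thesis by (intro that) auto
qed

lemma generator_mem_combinations:
  fixes v :: "nat \<Rightarrow> 'a::comm_semiring_1"
  assumes "0 \<in> K" and "1 \<in> K" and "i < n"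
  shows "v i \<in> {\<Sum>j<n. c j * v j | c. \<forall>j<n. c j \<in> K}"
proof -
  have "(\<Sum>j<n. (if j = i then 1 else 0) * v j) = (\<Sum>j<n. if j = i then v j else 0)"
    by (rule sum.cong) simp_all
  also have "\<dots> = v i"
    using assms(3) by simp
  finally have "(\<Sum>j<n. (if j = i then 1 else 0) * v j) = v i" .
  then show ?thesis
    using assms(1,2) by (intro CollectI exI[of _ "\<lambda>j. if j = i then 1 else 0"]) auto
qed

theorem theorem7p6:
  fixes p q k s m n :: nat and F :: "'a::field set"
    and a :: "nat \<Rightarrow> 'a" and L :: "'a poly" and v :: "nat \<Rightarrow> 'a"
  assumes "prime p" and "CHAR('a) = p"
    and "k \<ge> 1" and "q = p ^ k"
    and "is_subfield F"
    and "card {x::'a. x ^ q = x} = q" and "{x::'a. x ^ q = x} \<subseteq> F"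
    and "s > 1"
    and "\<not> (\<exists>K. K \<subseteq> F \<and> is_subfield K \<and> finite K \<and> card K = q ^ s)"
    and "m \<ge> 1" and "\<forall>i\<le>m. a i \<in> F" and "a m \<noteq> 0"
    and "L = (\<Sum>i\<le>m. monom (a i) (q ^ (i * s)))"
    and "L = smult (lead_coeff L) (\<Prod>x\<in>{x. poly L x = 0}. [:- x, 1:])"
    and "rsquarefree L"
    and "n = m * s"
    and "{x. poly L x = 0} = {\<Sum>i<n. c i * v i | c. \<forall>i<n. c i \<in> {x::'a. x ^ q = x}}"
    and "\<forall>c. (\<forall>i<n. c i \<in> {x::'a. x ^ q = x}) \<and> (\<Sum>i<n. c i * v i) = 0
              \<longrightarrow> (\<forall>i<n. c i = 0)"
  shows "\<not> inj_on (\<lambda>P. eval_hom n s P v) (Hns {x::'a. x ^ q = x} n s)"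
proof -
  have char: "prime CHAR('a)" "q = CHAR('a) ^ k"
    using assms(1,2,4) by simp_all
  have "q \<ge> 2"
    using prime_ge_2_nat[OF assms(1)] self_le_power[of p k] assms(3,4) by simp
  define Q where "Q = q ^ s"
  have "Q \<ge> 2" and Q_char: "Q = CHAR('a) ^ (k * s)"
    using \<open>q \<ge> 2\<close> assms(8) self_le_power[of q s] by (auto simp: Q_def char(2) power_mult)
  have L: "L = linearized_poly Q a m"
    using assms(13) by (simp add: linearized_poly_def Q_def mult.commute flip: power_mult)
  have "degree L = Q ^ m"
    unfolding L using \<open>Q \<ge> 2\<close> assms(12) by (rule degree_linearized_poly)
  moreover from this have "L \<noteq> 0"
    using \<open>Q \<ge> 2\<close> assms(10) by (intro notI) simp
  ultimately have card_roots: "card {x. poly L x = 0} = Q ^ m"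
    using card_roots_eq_degree[OF _ assms(14)] by simp
  have "v i \<in> {x. poly L x = 0}" if "i < n" for i
    unfolding assms(17) using \<open>q \<ge> 2\<close> that by (intro generator_mem_combinations) auto
  moreover have "m < n"
    using assms(8,10,16) by simp
  ultimately obtain e i0 where "i0 < n" "e i0 = 1" "\<forall>i<n. e i ^ Q = e i" "(\<Sum>i<n. e i * v i) = 0"
    using obtain_power_fixed_relation[OF char(1) Q_char \<open>Q \<ge> 2\<close> assms(10), of a n v]
      assms(12) card_roots
    unfolding L by blast
  then show ?thesis
    using assms(8) by (intro not_inj_on_eval_hom_of_relation[OF char]) (auto simp: Q_def)
qed

end
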